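(* Let $n\ge 1$ and let $G^n$ be the set of all $C^\infty$ diffeomorphisms $\mathbf{Y}:\mathbb{R}^n\setminus\{0\}\to\mathbb{R}^n\setminus\{0\}$ satisfying $\mathbf{Y}(\lambda\mathbf{x})=\lambda\mathbf{Y}(\mathbf{x})$ for all $\mathbf{x}\in\mathbb{R}^n\setminus\{0\}$ and all $\lambda\in\mathbb{R}\setminus\{0\}$; $G^n$ is a group under composition, where for $g_1,g_2\in G^n$ with associated maps $\mathbf{Y}_{g_1},\mathbf{Y}_{g_2}$ the product is defined by $\mathbf{Y}_{g_1g_2}=\mathbf{Y}_{g_1}\circ\mathbf{Y}_{g_2}$. Let $N^n\subset G^n$ be the subset of those elements $g$ whose map has the form $\mathbf{Y}_g(\mathbf{x})=\mathbf{x}\,r_g(\mathbf{x})$, where $r_g:\mathbb{R}^n\setminus\{0\}\to(0,\infty)$ is a $C^\infty$ function with $r_g(\lambda\mathbf{x})=r_g(\mathbf{x})$ for all $\lambda\in\mathbb{R}\setminus\{0\}$. Then $N^n$ is a normal abelian subgroup of $G^n$, and for all $g,g_1,g_2\in N^n$ and all $\mathbf{x}\in\mathbb{R}^n\setminus\{0\}$, $$r_{g_1g_2}(\mathbf{x})=r_{g_1}(\mathbf{x})\,r_{g_2}(\mathbf{x}),\qquad r_{g^{-1}}(\mathbf{x})=\frac{1}{r_g(\mathbf{x})}.$$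
   Context: $G^n$ is called the group of Thermodynamic Coordinate Transformations (TCT-group): homogeneous (degree one) diffeomorphisms of $\mathbb{R}^n\setminus\{0\}$. Elements $g$ of $G^n$ are identified with their maps $\mathbf{Y}_g$, and the group law is composition of maps. *)

theory Defs
  imports "HOL-Analysis.Analysis" "HOL-Algebra.Algebra"
begin

(* C^k on an open set S via iterated Frechet derivatives in the basis directions
   (i.e. all partial derivatives up to order k exist and are continuous). *)
fun Ck_on :: "nat \<Rightarrow> ('a::euclidean_space) set \<Rightarrow> ('a \<Rightarrow> 'b::real_normed_vector) \<Rightarrow> bool" where
  "Ck_on 0 S f = continuous_on S f"
| "Ck_on (Suc k) S f = (f differentiable_on S \<and>
      (\<forall>b\<in>Basis. Ck_on k S (\<lambda>x. frechet_derivative f (at x) b)))"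

definition smooth_on :: "('a::euclidean_space) set \<Rightarrow> ('a \<Rightarrow> 'b::real_normed_vector) \<Rightarrow> bool" where
  "smooth_on S f \<longleftrightarrow> (\<forall>k. Ck_on k S f)"

definition punctured :: "(real^'n) set" where
  "punctured = UNIV - {0}"

definition diffeo_on :: "(real^'n) set \<Rightarrow> (real^'n \<Rightarrow> real^'n) \<Rightarrow> bool" where
  "diffeo_on S Y \<longleftrightarrow> bij_betw Y S S \<and> smooth_on S Y \<and> smooth_on S (inv_into S Y)"

(* Elements of G^n: homogeneous (degree one) C^\<infinity> diffeomorphisms of R^n \ {0}.
   Convention: maps are represented as total functions extended by Y 0 = 0. *)
definition TCT_maps :: "(real^'n \<Rightarrow> real^'n) set" where
  "TCT_maps = {Y. diffeo_on punctured Y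
      \<and> (\<forall>x\<in>punctured. \<forall>l::real. l \<noteq> 0 \<longrightarrow> Y (l *\<^sub>R x) = l *\<^sub>R Y x)
      \<and> Y 0 = 0}"

definition TCT_group :: "(real^'n \<Rightarrow> real^'n) monoid" where
  "TCT_group = \<lparr>carrier = TCT_maps, mult = (\<lambda>Y1 Y2. Y1 \<circ> Y2), one = id\<rparr>"

definition radial_factor :: "(real^'n \<Rightarrow> real^'n) \<Rightarrow> (real^'n \<Rightarrow> real) \<Rightarrow> bool" where
  "radial_factor Y r \<longleftrightarrow> smooth_on punctured r
      \<and> (\<forall>x\<in>punctured. r x > 0)
      \<and> (\<forall>x\<in>punctured. \<forall>l::real. l \<noteq> 0 \<longrightarrow> r (l *\<^sub>R x) = r x)
      \<and> (\<forall>x\<in>punctured. Y x = r x *\<^sub>R x)"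

definition N_set :: "(real^'n \<Rightarrow> real^'n) set" where
  "N_set = {Y \<in> TCT_maps. \<exists>r. radial_factor Y r}"

end

theory Submission
  imports Defs
begin

text \<open>
  Every element of N is pointwise a positive rescaling x \<mapsto> r(x) x, and since r is constant
  along lines through the origin, composing two such maps just multiplies their factors; likewise
  the inverse has factor 1/r, and conjugating by a homogeneous map g gives the factor r \<circ> g\<inverse>.
  The factor is determined by the map, so these identities are exactly the product and inverse
  formulas, and commutativity of N comes from commutativity of multiplication of reals.  The only
  analytic input is that smoothness is preserved by products, inverses of positive functions and
  composition, which is proved by induction on the order of differentiability.
\<close>

lemma Ck_on_SucD: "Ck_on (Suc k) S f \<Longrightarrow> Ck_on k S f"
proof (induction k arbitrary: f)
  case 0
  then show ?case by (simp add: differentiable_imp_continuous_on)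
next
  case (Suc k)
  then show ?case by (metis Ck_on.simps(2))
qed

lemma Ck_on_Suc_has_derivative:
  "open S \<Longrightarrow> Ck_on (Suc k) S f \<Longrightarrow> x \<in> S \<Longrightarrow>
    (f has_derivative frechet_derivative f (at x)) (at x)"
  using differentiable_on_eq_differentiable_at frechet_derivative_works by (metis Ck_on.simps(2))

lemma Ck_on_cong:
  fixes f g :: "'a::euclidean_space \<Rightarrow> 'b::real_normed_vector"
  assumes "open S" "\<And>x. x \<in> S \<Longrightarrow> f x = g x" "Ck_on k S f"
  shows "Ck_on k S g"
  using assms(2,3)
proof (induction k arbitrary: f g)
  case 0
  then show ?case using continuous_on_cong by (metis Ck_on.simps(1))
next
  case (Suc k)
  have f_deriv: "(f has_derivative frechet_derivative f (at x)) (at x)" if "x \<in> S" for x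
    using Ck_on_Suc_has_derivative[OF assms(1) Suc.prems(2) that] .
  have g_deriv: "(g has_derivative frechet_derivative f (at x)) (at x)" if "x \<in> S" for x
    using has_derivative_transform_within_open[OF f_deriv[OF that] assms(1) that] Suc.prems(1) by blast
  have "g differentiable_on S"
    using g_deriv assms(1) differentiable_on_eq_differentiable_at differentiable_def by blast
  moreover have "frechet_derivative g (at x) = frechet_derivative f (at x)" if "x \<in> S" for x
    using g_deriv[OF that] frechet_derivative_at by metis
  ultimately show ?case
    using Suc.IH[of "\<lambda>x. frechet_derivative f (at x) _"] Suc.prems(2) by simp
qed

lemma Ck_on_SucI:
  fixes f :: "'a::euclidean_space \<Rightarrow> 'b::real_normed_vector"
  assumes "open S"
    and deriv: "\<And>x. x \<in> S \<Longrightarrow> (f has_derivative D x) (at x)"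
    and "\<And>b. b \<in> Basis \<Longrightarrow> Ck_on k S (\<lambda>x. D x b)"
  shows "Ck_on (Suc k) S f"
proof -
  have "f differentiable_on S"
    using deriv assms(1) differentiable_on_eq_differentiable_at differentiable_def by blast
  moreover have "frechet_derivative f (at x) = D x" if "x \<in> S" for x
    using deriv[OF that] frechet_derivative_at by metis
  ultimately show ?thesis
    using Ck_on_cong[OF assms(1), of "\<lambda>x. D x _"] assms(3) by simp
qed

lemma Ck_on_const: "Ck_on k S (\<lambda>x. c)"
  by (induction k arbitrary: c) simp_all

lemma Ck_on_id: "Ck_on k S (\<lambda>x. x)"
  by (induction k) (simp_all add: Ck_on_const)

lemma Ck_on_add:
  fixes f g :: "'a::euclidean_space \<Rightarrow> 'b::real_normed_vector"
  assumes "open S"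
  shows "Ck_on k S f \<Longrightarrow> Ck_on k S g \<Longrightarrow> Ck_on k S (\<lambda>x. f x + g x)"
proof (induction k arbitrary: f g)
  case 0
  then show ?case by (simp add: continuous_on_add)
next
  case (Suc k)
  show ?case
  proof (rule Ck_on_SucI[OF assms])
    fix x assume "x \<in> S"
    then show "((\<lambda>x. f x + g x) has_derivative
        (\<lambda>v. frechet_derivative f (at x) v + frechet_derivative g (at x) v)) (at x)"
      using Ck_on_Suc_has_derivative[OF assms Suc.prems(1)] Ck_on_Suc_has_derivative[OF assms Suc.prems(2)]
      by (auto intro: has_derivative_add)
  qed (use Suc in simp)
qed

lemma Ck_on_scaleR:
  fixes f :: "'a::euclidean_space \<Rightarrow> real" and g :: "'a \<Rightarrow> 'b::real_normed_vector"
  assumes "open S"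
  shows "Ck_on k S f \<Longrightarrow> Ck_on k S g \<Longrightarrow> Ck_on k S (\<lambda>x. f x *\<^sub>R g x)"
proof (induction k arbitrary: f g)
  case 0
  then show ?case by (simp add: continuous_on_scaleR)
next
  case (Suc k)
  show ?case
  proof (rule Ck_on_SucI[OF assms])
    fix x assume "x \<in> S"
    then show "((\<lambda>x. f x *\<^sub>R g x) has_derivative
        (\<lambda>v. f x *\<^sub>R frechet_derivative g (at x) v + frechet_derivative f (at x) v *\<^sub>R g x)) (at x)"
      using Ck_on_Suc_has_derivative[OF assms Suc.prems(1)] Ck_on_Suc_has_derivative[OF assms Suc.prems(2)]
      by (auto intro: has_derivative_scaleR)
  next
    fix b :: 'a assume "b \<in> Basis"
    then show "Ck_on k S (\<lambda>x. f x *\<^sub>R frechet_derivative g (at x) b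
        + frechet_derivative f (at x) b *\<^sub>R g x)"
      using Suc Ck_on_SucD[OF Suc.prems(1)] Ck_on_SucD[OF Suc.prems(2)]
      by (auto intro!: Ck_on_add[OF assms])
  qed
qed

lemma Ck_on_bounded_linear:
  fixes h :: "'a::euclidean_space \<Rightarrow> 'c::real_normed_vector" and L :: "'c \<Rightarrow> 'b::real_normed_vector"
  assumes "open S" "bounded_linear L"
  shows "Ck_on k S h \<Longrightarrow> Ck_on k S (\<lambda>x. L (h x))"
proof (induction k arbitrary: h)
  case 0
  then show ?case using assms(2) by (simp add: bounded_linear.continuous_on)
next
  case (Suc k)
  show ?case
  proof (rule Ck_on_SucI[OF assms(1)])
    fix x assume "x \<in> S"
    then show "((\<lambda>x. L (h x)) has_derivative (\<lambda>v. L (frechet_derivative h (at x) v))) (at x)"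
      by (rule bounded_linear.has_derivative[OF assms(2) Ck_on_Suc_has_derivative[OF assms(1) Suc.prems]])
  qed (use Suc in simp)
qed

lemma Ck_on_sum:
  assumes "open S" "finite I" "\<And>i. i \<in> I \<Longrightarrow> Ck_on k S (f i)"
  shows "Ck_on k S (\<lambda>x. \<Sum>i\<in>I. f i x)"
  using assms(2,3)
  by (induction I rule: finite_induct) (simp_all add: Ck_on_const Ck_on_add[OF assms(1)])

lemma Ck_on_compose:
  fixes f :: "'a::euclidean_space \<Rightarrow> 'c::euclidean_space" and g :: "'c \<Rightarrow> 'b::real_normed_vector"
  assumes "open S" "open T" "f ` S \<subseteq> T"
  shows "Ck_on k S f \<Longrightarrow> Ck_on k T g \<Longrightarrow> Ck_on k S (\<lambda>x. g (f x))"
proof (induction k arbitrary: g)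
  case 0
  then show ?case using continuous_on_compose2[of T g S f] assms(3) by simp
next
  case (Suc k)
  let ?Df = "\<lambda>x. frechet_derivative f (at x)" and ?Dg = "\<lambda>y. frechet_derivative g (at y)"
  have f_deriv: "\<And>x. x \<in> S \<Longrightarrow> (f has_derivative ?Df x) (at x)"
    using Ck_on_Suc_has_derivative[OF assms(1) Suc.prems(1)] .
  have g_deriv: "\<And>x. x \<in> S \<Longrightarrow> (g has_derivative ?Dg (f x)) (at (f x))"
    using Ck_on_Suc_has_derivative[OF assms(2) Suc.prems(2)] assms(3) by auto
  show ?case
  proof (rule Ck_on_SucI[OF assms(1)])
    fix x assume "x \<in> S"
    then show "((\<lambda>x. g (f x)) has_derivative (\<lambda>v. ?Dg (f x) (?Df x v))) (at x)"
      using diff_chain_at[OF f_deriv g_deriv] by (simp add: o_def)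
  next
    fix b :: 'a assume b: "b \<in> Basis"
    \<comment> \<open>expand the chain rule in the basis of the middle space, so that only first
      partial derivatives of g, composed with f, occur\<close>
    have chain_basis: "?Dg (f x) (?Df x b) = (\<Sum>j\<in>Basis. (?Df x b \<bullet> j) *\<^sub>R ?Dg (f x) j)"
      if "x \<in> S" for x
    proof -
      have lin: "linear (?Dg (f x))" using has_derivative_linear[OF g_deriv[OF that]] .
      have "?Dg (f x) (?Df x b) = ?Dg (f x) (\<Sum>j\<in>Basis. (?Df x b \<bullet> j) *\<^sub>R j)"
        by (simp add: euclidean_representation)
      also have "\<dots> = (\<Sum>j\<in>Basis. (?Df x b \<bullet> j) *\<^sub>R ?Dg (f x) j)"
        by (simp add: linear_sum[OF lin] linear_cmul[OF lin])
      finally show ?thesis .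
    qed
    have "Ck_on k S (\<lambda>x. \<Sum>j\<in>Basis. (?Df x b \<bullet> j) *\<^sub>R ?Dg (f x) j)"
    proof (intro Ck_on_sum[OF assms(1) finite_Basis] Ck_on_scaleR[OF assms(1)])
      show "Ck_on k S (\<lambda>x. ?Df x b \<bullet> j)" for j
        using Suc.prems(1) b by (intro Ck_on_bounded_linear[OF assms(1) bounded_linear_inner_left]) simp
      show "Ck_on k S (\<lambda>x. ?Dg (f x) j)" if "j \<in> Basis" for j
        using Suc.prems(2) that
        by (intro Suc.IH[OF Ck_on_SucD[OF Suc.prems(1)], of "\<lambda>y. frechet_derivative g (at y) j"]) simp
    qed
    then show "Ck_on k S (\<lambda>x. ?Dg (f x) (?Df x b))"
      by (rule Ck_on_cong[OF assms(1), rotated]) (use chain_basis in simp)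
  qed
qed

lemma Ck_on_inverse: "Ck_on k {0<..} (inverse :: real \<Rightarrow> real)"
proof (induction k)
  case 0
  then show ?case by (auto intro!: continuous_on_inverse continuous_on_id)
next
  case (Suc k)
  show ?case
  proof (rule Ck_on_SucI[OF open_greaterThan])
    show "(inverse has_derivative (\<lambda>v. - (inverse x * v * inverse x))) (at x)"
      if "x \<in> {0::real<..}" for x
      using that by (intro has_derivative_inverse') simp
    have "Ck_on k {0<..} (\<lambda>x::real. (- b) *\<^sub>R (inverse x *\<^sub>R inverse x))" for b
      by (intro Ck_on_scaleR[OF open_greaterThan] Ck_on_const Suc.IH)
    then show "Ck_on k {0<..} (\<lambda>x::real. - (inverse x * b * inverse x))" for b
      by (simp add: algebra_simps)
  qed
qed

lemma smooth_on_cong: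
  fixes f g :: "'a::euclidean_space \<Rightarrow> 'b::real_normed_vector"
  shows "open S \<Longrightarrow> (\<And>x. x \<in> S \<Longrightarrow> f x = g x) \<Longrightarrow> smooth_on S f \<Longrightarrow> smooth_on S g"
  unfolding smooth_on_def using Ck_on_cong by blast

lemma smooth_on_compose:
  fixes f :: "'a::euclidean_space \<Rightarrow> 'c::euclidean_space" and g :: "'c \<Rightarrow> 'b::real_normed_vector"
  shows "open S \<Longrightarrow> open T \<Longrightarrow> f ` S \<subseteq> T \<Longrightarrow> smooth_on S f \<Longrightarrow> smooth_on T g
    \<Longrightarrow> smooth_on S (\<lambda>x. g (f x))"
  unfolding smooth_on_def using Ck_on_compose by blast

lemma smooth_on_mult:
  fixes f g :: "'a::euclidean_space \<Rightarrow> real"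
  shows "open S \<Longrightarrow> smooth_on S f \<Longrightarrow> smooth_on S g \<Longrightarrow> smooth_on S (\<lambda>x. f x * g x)"
  unfolding smooth_on_def using Ck_on_scaleR[of S _ f g] by simp

lemma smooth_on_const: "smooth_on S (\<lambda>x. c)"
  unfolding smooth_on_def using Ck_on_const by blast

lemma smooth_on_id: "smooth_on S (\<lambda>x. x)"
  unfolding smooth_on_def using Ck_on_id by blast

lemma smooth_on_inverse:
  fixes r :: "'a::euclidean_space \<Rightarrow> real"
  shows "open S \<Longrightarrow> smooth_on S r \<Longrightarrow> (\<And>x. x \<in> S \<Longrightarrow> r x > 0) \<Longrightarrow> smooth_on S (\<lambda>x. inverse (r x))"
  by (rule smooth_on_compose[where T="{0<..}"]) (auto simp: smooth_on_def Ck_on_inverse)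

lemma open_punctured: "open (punctured :: (real^'n) set)"
  unfolding punctured_def by (simp add: open_Diff)

lemma in_punctured_iff [simp]: "x \<in> punctured \<longleftrightarrow> x \<noteq> 0"
  unfolding punctured_def by simp

lemma TCT_mapsD:
  assumes "Y \<in> TCT_maps"
  shows "bij_betw Y punctured punctured" "smooth_on punctured Y"
    "smooth_on punctured (inv_into punctured Y)" "Y 0 = 0"
    "\<And>x l. x \<noteq> 0 \<Longrightarrow> l \<noteq> 0 \<Longrightarrow> Y (l *\<^sub>R x) = l *\<^sub>R Y x"
  using assms unfolding TCT_maps_def diffeo_on_def by auto

lemma TCT_maps_nonzero: "Y \<in> TCT_maps \<Longrightarrow> x \<noteq> 0 \<Longrightarrow> Y x \<noteq> 0"
  using TCT_mapsD(1) bij_betwE by fastforce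

definition inv_punctured :: "(real^'n \<Rightarrow> real^'n) \<Rightarrow> real^'n \<Rightarrow> real^'n" where
  "inv_punctured Y x = (if x = 0 then 0 else inv_into punctured Y x)"

lemma
  assumes "Y \<in> TCT_maps"
  shows inv_punctured_left [simp]: "inv_punctured Y (Y x) = x"
    and inv_punctured_right [simp]: "Y (inv_punctured Y x) = x"
proof -
  note bij = TCT_mapsD(1)[OF assms]
  show "inv_punctured Y (Y x) = x"
    using assms bij_betw_inv_into_left[OF bij]
    by (cases "x = 0") (auto simp: inv_punctured_def TCT_mapsD(4) TCT_maps_nonzero)
  show "Y (inv_punctured Y x) = x"
    using assms bij_betw_inv_into_right[OF bij]
    by (cases "x = 0") (auto simp: inv_punctured_def TCT_mapsD(4))
qed

lemma bij_betw_inv_punctured: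
  "Y \<in> TCT_maps \<Longrightarrow> bij_betw (inv_punctured Y) punctured punctured"
  by (rule bij_betw_byWitness[where f'=Y])
    (auto simp: TCT_maps_nonzero, metis TCT_mapsD(4) inv_punctured_right)

lemma TCT_maps_inv_punctured:
  assumes Y: "Y \<in> TCT_maps"
  shows "inv_punctured Y \<in> TCT_maps"
proof -
  have bij: "bij_betw (inv_punctured Y) punctured punctured"
    using bij_betw_inv_punctured[OF Y] .
  have "inv_into punctured Y x = inv_punctured Y x" if "x \<in> punctured" for x
    using that by (simp add: inv_punctured_def)
  then have "smooth_on punctured (inv_punctured Y)"
    using smooth_on_cong[OF open_punctured _ TCT_mapsD(3)[OF Y]] by blast
  moreover have "Y x = inv_into punctured (inv_punctured Y) x" if "x \<in> punctured" for x
    using that Y bij_betw_imp_inj_on[OF bij] TCT_maps_nonzero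
    by (intro inv_into_f_eq[symmetric]) auto
  then have "smooth_on punctured (inv_into punctured (inv_punctured Y))"
    using smooth_on_cong[OF open_punctured _ TCT_mapsD(2)[OF Y]] by blast
  moreover have "inv_punctured Y (l *\<^sub>R x) = l *\<^sub>R inv_punctured Y x" if "x \<noteq> 0" "l \<noteq> 0" for x l
    using TCT_mapsD(5)[OF Y, of "inv_punctured Y x" l] that Y bij
    by (metis bij_betwE in_punctured_iff inv_punctured_left inv_punctured_right)
  ultimately show ?thesis
    using bij unfolding TCT_maps_def diffeo_on_def by (simp add: inv_punctured_def)
qed

lemma TCT_maps_comp:
  assumes Y1: "Y1 \<in> TCT_maps" and Y2: "Y2 \<in> TCT_maps"
  shows "Y1 \<circ> Y2 \<in> TCT_maps"
proof -
  note Y1' = TCT_maps_inv_punctured[OF Y1] and Y2' = TCT_maps_inv_punctured[OF Y2]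
  have bij: "bij_betw (Y1 \<circ> Y2) punctured punctured"
    using bij_betw_trans[OF TCT_mapsD(1)[OF Y2] TCT_mapsD(1)[OF Y1]] .
  have "smooth_on punctured (Y1 \<circ> Y2)"
    unfolding o_def
    by (rule smooth_on_compose[OF open_punctured open_punctured _ TCT_mapsD(2)[OF Y2] TCT_mapsD(2)[OF Y1]])
      (auto simp: TCT_maps_nonzero[OF Y2])
  moreover have "inv_punctured Y2 (inv_punctured Y1 x) = inv_into punctured (Y1 \<circ> Y2) x"
    if "x \<in> punctured" for x
    using that Y1 Y2 TCT_maps_nonzero[OF Y1'] TCT_maps_nonzero[OF Y2']
    by (intro inv_into_f_eq[OF bij_betw_imp_inj_on[OF bij], symmetric]) auto
  then have "smooth_on punctured (inv_into punctured (Y1 \<circ> Y2))"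
    using smooth_on_cong[OF open_punctured]
      smooth_on_compose[OF open_punctured open_punctured _ TCT_mapsD(2)[OF Y1'] TCT_mapsD(2)[OF Y2']]
      TCT_maps_nonzero[OF Y1']
    by (metis (no_types, lifting) image_subsetI in_punctured_iff)
  ultimately show ?thesis
    using bij TCT_mapsD(4,5)[OF Y1] TCT_mapsD(4,5)[OF Y2] TCT_maps_nonzero[OF Y2]
    unfolding TCT_maps_def diffeo_on_def by simp
qed

lemma id_in_TCT_maps: "id \<in> TCT_maps"
proof -
  have "x = inv_into punctured (\<lambda>x. x) x" if "x \<in> punctured" for x :: "real^'n"
    using that by (intro inv_into_f_eq[symmetric]) auto
  then have "smooth_on punctured (inv_into punctured (\<lambda>x::real^'n. x))"
    using smooth_on_cong[OF open_punctured _ smooth_on_id] by blast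
  then show ?thesis
    unfolding TCT_maps_def diffeo_on_def by (simp add: id_def smooth_on_id bij_betw_def)
qed

lemma TCT_group_simps [simp]:
  "carrier TCT_group = TCT_maps"
  "Y1 \<otimes>\<^bsub>TCT_group\<^esub> Y2 = Y1 \<circ> Y2"
  "\<one>\<^bsub>TCT_group\<^esub> = id"
  by (simp_all add: TCT_group_def)

lemma group_TCT_group: "group TCT_group"
proof (rule groupI)
  show "\<exists>Y'\<in>carrier TCT_group. Y' \<otimes>\<^bsub>TCT_group\<^esub> Y = \<one>\<^bsub>TCT_group\<^esub>"
    if "Y \<in> carrier TCT_group" for Y :: "real^'n \<Rightarrow> real^'n"
    using that TCT_maps_inv_punctured by (auto intro!: bexI[of _ "inv_punctured Y"])
qed (auto simp: TCT_maps_comp id_in_TCT_maps o_assoc)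

lemma inv_TCT_group: "Y \<in> TCT_maps \<Longrightarrow> inv\<^bsub>TCT_group\<^esub> Y = inv_punctured Y"
  by (rule group.inv_equality[OF group_TCT_group]) (auto simp: TCT_maps_inv_punctured)

lemma radial_factorD:
  assumes "radial_factor Y r"
  shows "smooth_on punctured r" "\<And>x. x \<noteq> 0 \<Longrightarrow> r x > 0"
    "\<And>x l. x \<noteq> 0 \<Longrightarrow> l \<noteq> 0 \<Longrightarrow> r (l *\<^sub>R x) = r x"
    "\<And>x. x \<noteq> 0 \<Longrightarrow> Y x = r x *\<^sub>R x"
  using assms unfolding radial_factor_def by auto

lemma radial_factor_unique:
  assumes "radial_factor Y r" "radial_factor Y r'" "x \<noteq> 0"
  shows "r x = r' x"
  using radial_factorD(4)[OF assms(1,3)] radial_factorD(4)[OF assms(2,3)] assms(3)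
  by simp

lemma radial_factor_comp:
  assumes Y1: "radial_factor Y1 r1" and Y2: "radial_factor Y2 r2"
  shows "radial_factor (Y1 \<circ> Y2) (\<lambda>x. r1 x * r2 x)"
proof -
  \<comment> \<open>Y2 only rescales x, and r1 is constant along lines\<close>
  have "Y1 (Y2 x) = (r1 x * r2 x) *\<^sub>R x" if "x \<noteq> 0" for x
    using that radial_factorD[OF Y1] radial_factorD(2,4)[OF Y2 that] by simp
  then show ?thesis
    unfolding radial_factor_def
    using smooth_on_mult[OF open_punctured radial_factorD(1)[OF Y1] radial_factorD(1)[OF Y2]]
      radial_factorD(2,3)[OF Y1] radial_factorD(2,3)[OF Y2] by simp
qed

lemma radial_factor_inv_punctured:
  assumes Y: "Y \<in> TCT_maps" and r: "radial_factor Y r"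
  shows "radial_factor (inv_punctured Y) (\<lambda>x. inverse (r x))"
proof -
  have "inv_punctured Y x = inverse (r x) *\<^sub>R x" if x: "x \<noteq> 0" for x
  proof -
    define z where "z = inv_punctured Y x"
    have "z \<noteq> 0" using TCT_maps_nonzero[OF TCT_maps_inv_punctured[OF Y] x] by (simp add: z_def)
    have rz: "r z > 0" using radial_factorD(2)[OF r \<open>z \<noteq> 0\<close>] .
    have x_eq: "x = r z *\<^sub>R z" using radial_factorD(4)[OF r \<open>z \<noteq> 0\<close>] Y by (simp add: z_def)
    then have "r x = r z" using radial_factorD(3)[OF r \<open>z \<noteq> 0\<close>, of "r z"] rz by simp
    then have "z = inverse (r x) *\<^sub>R x" using x_eq rz by simp
    then show ?thesis by (simp add: z_def)
  qed
  then show ?thesis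
    unfolding radial_factor_def
    using smooth_on_inverse[OF open_punctured radial_factorD(1)[OF r]] radial_factorD(2,3)[OF r] by simp
qed

lemma radial_factor_conj:
  assumes Z: "Z \<in> TCT_maps" and r: "radial_factor Y r"
  shows "radial_factor (Z \<circ> Y \<circ> inv_punctured Z) (\<lambda>x. r (inv_punctured Z x))"
proof -
  note Z' = TCT_maps_inv_punctured[OF Z]
  \<comment> \<open>homogeneity of Z lets the scalar r(Z\<inverse> x) pass through Z\<close>
  have "Z (Y (inv_punctured Z x)) = r (inv_punctured Z x) *\<^sub>R x" if "x \<noteq> 0" for x
  proof -
    have w: "inv_punctured Z x \<noteq> 0" using TCT_maps_nonzero[OF Z' that] .
    then have "r (inv_punctured Z x) \<noteq> 0" using radial_factorD(2)[OF r] by force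
    then show ?thesis using radial_factorD(4)[OF r w] TCT_mapsD(5)[OF Z w] Z by simp
  qed
  moreover have "smooth_on punctured (\<lambda>x. r (inv_punctured Z x))"
    by (rule smooth_on_compose[OF open_punctured open_punctured _ TCT_mapsD(2)[OF Z'] radial_factorD(1)[OF r]])
      (auto simp: TCT_maps_nonzero[OF Z'])
  ultimately show ?thesis
    unfolding radial_factor_def
    using radial_factorD(2,3)[OF r] TCT_maps_nonzero[OF Z'] TCT_mapsD(5)[OF Z'] by simp
qed

lemma N_set_comp_commute:
  assumes "Y1 \<in> N_set" "Y2 \<in> N_set"
  shows "Y1 \<circ> Y2 = Y2 \<circ> Y1"
proof
  obtain r1 r2 where r: "radial_factor Y1 r1" "radial_factor Y2 r2"
    using assms by (auto simp: N_set_def)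
  fix x
  show "(Y1 \<circ> Y2) x = (Y2 \<circ> Y1) x"
  proof (cases "x = 0")
    case True
    then show ?thesis using assms by (simp add: N_set_def TCT_mapsD(4))
  next
    case False
    then show ?thesis
      using radial_factorD(4)[OF radial_factor_comp[OF r]] radial_factorD(4)[OF radial_factor_comp[OF r(2,1)]]
      by (simp add: mult.commute)
  qed
qed

lemma subgroup_N_set: "subgroup (N_set :: (real^'n \<Rightarrow> real^'n) set) TCT_group"
proof (rule group.subgroupI[OF group_TCT_group])
  show "N_set \<subseteq> carrier TCT_group" by (auto simp: N_set_def)
  have "radial_factor id (\<lambda>x. 1)" unfolding radial_factor_def by (simp add: smooth_on_const)
  then show "N_set \<noteq> {}" using id_in_TCT_maps by (auto simp: N_set_def)
  show "inv\<^bsub>TCT_group\<^esub> Y \<in> N_set" if "Y \<in> N_set" for Y :: "real^'n \<Rightarrow> real^'n"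
    using that radial_factor_inv_punctured TCT_maps_inv_punctured
    by (fastforce simp: N_set_def inv_TCT_group)
  show "Y1 \<otimes>\<^bsub>TCT_group\<^esub> Y2 \<in> N_set" if "Y1 \<in> N_set" "Y2 \<in> N_set" for Y1 Y2 :: "real^'n \<Rightarrow> real^'n"
    using that radial_factor_comp TCT_maps_comp by (fastforce simp: N_set_def)
qed

lemma normal_N_set: "(N_set :: (real^'n \<Rightarrow> real^'n) set) \<lhd> TCT_group"
proof -
  have "Z \<circ> Y \<circ> inv_punctured Z \<in> N_set" if Z: "Z \<in> TCT_maps" and "Y \<in> N_set" for Z Y :: "real^'n \<Rightarrow> real^'n"
  proof -
    obtain r where "radial_factor Y r" "Y \<in> TCT_maps" using \<open>Y \<in> N_set\<close> by (auto simp: N_set_def)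
    then show ?thesis
      using radial_factor_conj[OF Z] TCT_maps_comp[OF TCT_maps_comp[OF Z] TCT_maps_inv_punctured[OF Z]]
      unfolding N_set_def by blast
  qed
  then show ?thesis
    unfolding group.normal_inv_iff[OF group_TCT_group] using subgroup_N_set by (simp add: inv_TCT_group)
qed

lemma comm_group_N_set: "comm_group (TCT_group\<lparr>carrier := N_set\<rparr>)"
  by (rule group.group_comm_groupI[OF subgroup.subgroup_is_group[OF subgroup_N_set group_TCT_group]])
    (simp add: TCT_group_def N_set_comp_commute)

theorem proposition1:
  shows "(N_set :: (real^'n \<Rightarrow> real^'n) set) \<lhd> TCT_group
    \<and> comm_group (TCT_group\<lparr>carrier := (N_set :: (real^'n \<Rightarrow> real^'n) set)\<rparr>)
    \<and> (\<forall>g1\<in>(N_set :: (real^'n \<Rightarrow> real^'n) set). \<forall>g2\<in>(N_set :: (real^'n \<Rightarrow> real^'n) set). \<forall>r1 r2 r.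
          radial_factor g1 r1 \<longrightarrow> radial_factor g2 r2
          \<longrightarrow> radial_factor (g1 \<otimes>\<^bsub>TCT_group\<^esub> g2) r
          \<longrightarrow> (\<forall>x\<in>punctured. r x = r1 x * r2 x))
    \<and> (\<forall>g\<in>(N_set :: (real^'n \<Rightarrow> real^'n) set). \<forall>rg r.
          radial_factor g rg \<longrightarrow> radial_factor (inv\<^bsub>TCT_group\<^esub> g) r
          \<longrightarrow> (\<forall>x\<in>punctured. r x = 1 / rg x))"
proof (intro conjI normal_N_set comm_group_N_set ballI allI impI)
  fix g1 g2 :: "real^'n \<Rightarrow> real^'n" and r1 r2 r and x :: "real^'n"
  assume "radial_factor g1 r1" "radial_factor g2 r2" "radial_factor (g1 \<otimes>\<^bsub>TCT_group\<^esub> g2) r"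
    and "x \<in> punctured"
  then show "r x = r1 x * r2 x"
    using radial_factor_unique[OF _ radial_factor_comp] by simp
next
  fix g :: "real^'n \<Rightarrow> real^'n" and rg r and x :: "real^'n"
  assume g: "g \<in> N_set" and rg: "radial_factor g rg"
    and r: "radial_factor (inv\<^bsub>TCT_group\<^esub> g) r" and "x \<in> punctured"
  have "g \<in> TCT_maps" using g by (simp add: N_set_def)
  with r \<open>x \<in> punctured\<close> show "r x = 1 / rg x"
    using radial_factor_unique[OF _ radial_factor_inv_punctured[OF _ rg]]
    by (simp add: inv_TCT_group inverse_eq_divide)
qed

end
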